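(* Let $G\in\mathrm{C}^1(\mathbb{R})$ be coercive and $V\in\mathrm{Lip}(\mathbb{R})$ be $1$-periodic. For all $\theta_1,\theta_2\in\mathbb{R}$ with $\theta_1<\theta_2$, we have $f_{\theta_1}(x)<f_{\theta_2}(x)$ for all $x\in\mathbb{R}$.
   Context: $G$ coercive means $G(p)\to\infty$ as $p\to\pm\infty$. For each $\theta\in\mathbb{R}$, $f_\theta\in\mathrm{C}^1(\mathbb{R})$ denotes the unique $1$-periodic function such that $\int_0^1 f_\theta(x)dx=\theta$ and, for some (unique) constant $\overline{H}(\theta)\in\mathbb{R}$, $f_\theta'(x)+G(f_\theta(x))+V(x)=\overline{H}(\theta)$ for all $x\in\mathbb{R}$. *)

theory Defs
  imports "HOL-Analysis.Analysis"
begin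

definition coercive :: "(real \<Rightarrow> real) \<Rightarrow> bool" where
  "coercive G \<longleftrightarrow> filterlim G at_top at_top \<and> filterlim G at_top at_bot"

definition periodic1 :: "(real \<Rightarrow> real) \<Rightarrow> bool" where
  "periodic1 f \<longleftrightarrow> (\<forall>x. f (x + 1) = f x)"

definition corrector :: "(real \<Rightarrow> real) \<Rightarrow> (real \<Rightarrow> real) \<Rightarrow> real \<Rightarrow> (real \<Rightarrow> real) \<Rightarrow> real \<Rightarrow> bool" where
  "corrector G V \<theta> f H \<longleftrightarrow>
     f C1_differentiable_on UNIV \<and> periodic1 f \<and> integral {0..1} f = \<theta> \<and>
     (\<forall>x. deriv f x + G (f x) + V x = H)"

definition f_theta :: "(real \<Rightarrow> real) \<Rightarrow> (real \<Rightarrow> real) \<Rightarrow> real \<Rightarrow> (real \<Rightarrow> real)" where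
  "f_theta G V \<theta> = (THE f. \<exists>H. corrector G V \<theta> f H)"

end

theory Submission
  imports Defs
begin

(*
  Two correctors with levels
  H1 < H2 never touch: at a contact point f1 - f2 has derivative H1 - H2 < 0, so it can cross
  zero only downwards, which a periodic function cannot do. Touching correctors with equal
  levels coincide by uniqueness for the ODE (Gronwall). Hence f_theta1 and f_theta2 never touch,
  and as f_theta2 - f_theta1 has mean theta2 - theta1 > 0, it is positive everywhere.

  Existence (needed for f_theta to be meaningful): clip G outside a large interval [-R, R], so
  that it is bounded and Lipschitz. For every initial value a there is a level H(a) for which the
  solution from a returns to a after one period; H(a) is continuous in a because the return value
  is strictly increasing in H. The mean of the resulting periodic solution is continuous in a and
  stays within a bounded distance of a, so it attains theta. Coercivity of G keeps this solution
  inside [-R, R], where the clipping is invisible.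
*)

lemma periodic1_add_of_int:
  assumes "periodic1 f"
  shows "f (x + of_int k) = f x"
proof -
  have per: "f (y + 1) = f y" for y using assms unfolding periodic1_def by blast
  show ?thesis
  proof (induction k rule: int_induct[where k = 0])
    case (step1 i)
    have "f (x + of_int (i + 1)) = f ((x + of_int i) + 1)" by (simp add: add.assoc)
    also have "\<dots> = f x" using per step1(2) by simp
    finally show ?case .
  next
    case (step2 i)
    have "f (x + of_int (i - 1)) = f ((x + of_int (i - 1)) + 1)" by (rule per[symmetric])
    also have "\<dots> = f (x + of_int i)" by (simp add: algebra_simps)
    also have "\<dots> = f x" by (rule step2(2))
    finally show ?case .
  qed simp
qed

lemma floor_shift_in_period:
  fixes x z :: real
  shows "x - of_int \<lfloor>x - z\<rfloor> \<in> {z..z+1}"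
  unfolding atLeastAtMost_iff by (intro conjI; linarith)

lemma periodic1_floor_shift:
  assumes "periodic1 f"
  shows "f (x - of_int \<lfloor>x - z\<rfloor>) = f x"
  using periodic1_add_of_int[OF assms, of x "- \<lfloor>x - z\<rfloor>"] by simp

lemma periodic1_eqI:
  assumes "periodic1 f" "periodic1 g" "\<And>t. t \<in> {z..z+1} \<Longrightarrow> f t = g t"
  shows "f = g"
proof
  fix x
  show "f x = g x"
    using assms(3)[OF floor_shift_in_period] periodic1_floor_shift[OF assms(1)] periodic1_floor_shift[OF assms(2)]
    by metis
qed

lemma continuous_periodic1_bounded:
  assumes "continuous_on UNIV f" "periodic1 f"
  obtains M where "\<And>x. \<bar>f x\<bar> \<le> M"
proof -
  have "bounded (f ` {0..1})"
    by (intro compact_imp_bounded compact_continuous_image continuous_on_subset[OF assms(1)]) auto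
  then obtain M where M: "\<forall>t\<in>{0..1}. \<bar>f t\<bar> \<le> M" by (auto simp: bounded_iff)
  have "\<bar>f x\<bar> \<le> M" for x
  proof -
    have "\<bar>f (x - of_int \<lfloor>x - 0\<rfloor>)\<bar> \<le> M" using M floor_shift_in_period[of x 0] by simp
    then show ?thesis using periodic1_floor_shift[OF assms(2), of x 0] by simp
  qed
  then show ?thesis by (rule that)
qed

lemma integral_value_attained:
  fixes f :: "real \<Rightarrow> real"
  assumes cont: "continuous_on {0..1} f"
  shows "\<exists>x\<in>{0..1}. f x = integral {0..1} f"
proof -
  obtain xm where xm: "xm \<in> {0..1}" "\<And>y. y \<in> {0..1} \<Longrightarrow> f xm \<le> f y"
    using continuous_attains_inf[OF compact_Icc _ cont] by auto
  obtain xM where xM: "xM \<in> {0..1}" "\<And>y. y \<in> {0..1} \<Longrightarrow> f y \<le> f xM"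
    using continuous_attains_sup[OF compact_Icc _ cont] by auto
  have int: "f integrable_on {0..1}" by (rule integrable_continuous_real[OF cont])
  have "integral {0..1} (\<lambda>_::real. f xm) \<le> integral {0..1} f"
    by (rule Henstock_Kurzweil_Integration.integral_le) (use int xm in auto)
  moreover have "integral {0..1} f \<le> integral {0..1} (\<lambda>_::real. f xM)"
    by (rule Henstock_Kurzweil_Integration.integral_le) (use int xM in auto)
  ultimately have lo: "f xm \<le> integral {0..1} f" and hi: "integral {0..1} f \<le> f xM"
    by simp_all
  have "connected (f ` {0..1})" by (rule connected_continuous_image[OF cont connected_Icc])
  then have "{f xm..f xM} \<subseteq> f ` {0..1}"
    by (rule connected_contains_Icc) (use xm(1) xM(1) in auto)
  then have "integral {0..1} f \<in> f ` {0..1}" by (rule subsetD) (use lo hi in simp)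
  then obtain x where "integral {0..1} f = f x" "x \<in> {0..1}" by (rule imageE)
  then show ?thesis by auto
qed

lemma continuous_nonvanishing_pos:
  fixes h :: "real \<Rightarrow> real"
  assumes "continuous_on UNIV h" "\<And>x. h x \<noteq> 0" "h z > 0"
  shows "h x > 0"
proof (rule ccontr)
  assume "\<not> h x > 0"
  have "connected (range h)" by (rule connected_continuous_image[OF assms(1) connected_UNIV])
  then have "{h x..h z} \<subseteq> range h" by (rule connected_contains_Icc) auto
  then have "0 \<in> range h" by (rule subsetD) (use \<open>\<not> h x > 0\<close> assms(3) in simp)
  then obtain y where "0 = h y" by (rule rangeE)
  then show False using assms(2) by simp
qed

lemma continuous_on_implicit_root:
  fixes Q :: "real \<Rightarrow> real \<Rightarrow> real" and \<phi> :: "real \<Rightarrow> real"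
  assumes mono: "\<And>a. strict_mono (Q a)" and cont: "\<And>H. continuous_on UNIV (\<lambda>a. Q a H)"
    and root: "\<And>a. Q a (\<phi> a) = 0"
  shows "continuous_on UNIV \<phi>"
proof (intro continuous_at_imp_continuous_on ballI)
  fix a
  have lim: "((\<lambda>a'. Q a' H) \<longlongrightarrow> Q a H) (at a)" for H
    using cont[of H] by (simp add: continuous_on_def)
  show "isCont \<phi> a"
    unfolding isCont_def
  proof (rule order_tendstoI)
    fix b assume "b < \<phi> a"
    then have "Q a b < 0" using strict_monoD[OF mono] root by metis
    with lim have "eventually (\<lambda>a'. Q a' b < 0) (at a)" by (rule order_tendstoD)
    then show "eventually (\<lambda>a'. b < \<phi> a') (at a)"
      by eventually_elim (metis root mono strict_mono_less)
  next
    fix b assume "\<phi> a < b"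
    then have "0 < Q a b" using strict_monoD[OF mono] root by metis
    with lim have "eventually (\<lambda>a'. 0 < Q a' b) (at a)" by (rule order_tendstoD)
    then show "eventually (\<lambda>a'. \<phi> a' < b) (at a)"
      by eventually_elim (metis root mono strict_mono_less)
  qed
qed

lemma negative_persists_if_decreasing_at_zeros:
  fixes h :: "real \<Rightarrow> real"
  assumes "r < t" and cont: "continuous_on {r..t} h" and "h r < 0"
    and decr: "\<And>z. z \<in> {r<..t} \<Longrightarrow> h z = 0 \<Longrightarrow> \<exists>d<0. (h has_real_derivative d) (at z within S)"
    and "{r..t} \<subseteq> S"
  shows "h t < 0"
proof (rule ccontr)
  assume "\<not> h t < 0"
  define N where "N = {x \<in> {r..t}. 0 \<le> h x}"
  have "closed N" unfolding N_def
    by (rule continuous_on_closed_Collect_le) (auto intro: cont continuous_intros)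
  moreover have "t \<in> N" using \<open>\<not> h t < 0\<close> \<open>r < t\<close> by (simp add: N_def)
  moreover have "bdd_below N" unfolding N_def by (rule bdd_belowI[of _ r]) auto
  ultimately have "Inf N \<in> N" and first: "\<And>x. x \<in> N \<Longrightarrow> Inf N \<le> x"
    by (auto intro: closed_contains_Inf cInf_lower)
  define z where "z = Inf N"
  have z: "r < z" "z \<le> t" "0 \<le> h z"
    using \<open>Inf N \<in> N\<close> \<open>h r < 0\<close> unfolding z_def N_def by (auto simp: le_less)
  have before: "h x < 0" if "r \<le> x" "x < z" for x
  proof (rule ccontr)
    assume "\<not> h x < 0"
    then have "x \<in> N" using that z unfolding N_def by auto
    then show False using first[of x] that unfolding z_def by auto
  qed
  have "h z = 0"
  proof (rule ccontr)
    assume "h z \<noteq> 0"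
    have "continuous_on {r..z} h" by (rule continuous_on_subset[OF cont]) (use z in auto)
    then have "\<exists>x\<ge>r. x \<le> z \<and> h x = 0"
      by (intro IVT') (use \<open>h r < 0\<close> z in auto)
    then obtain x where "r \<le> x" "x \<le> z" "h x = 0" by blast
    then show False using before[of x] \<open>h z \<noteq> 0\<close> by (cases "x = z") auto
  qed
  from decr[of z] this z obtain d where "d < 0" "(h has_real_derivative d) (at z within S)"
    by auto
  then obtain e where e: "e > 0" "\<And>\<eta>. \<eta> > 0 \<Longrightarrow> z - \<eta> \<in> S \<Longrightarrow> \<eta> < e \<Longrightarrow> h z < h (z - \<eta>)"
    using has_real_derivative_neg_dec_left by blast
  obtain \<eta> where "0 < \<eta>" "\<eta> < e" "\<eta> < z - r"
    using field_lbound_gt_zero[of e "z - r"] e z by auto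
  moreover have "z - \<eta> \<in> S" using \<open>{r..t} \<subseteq> S\<close> \<open>\<eta> < z - r\<close> \<open>0 < \<eta>\<close> z by auto
  ultimately show False using e(2)[of \<eta>] before[of "z - \<eta>"] \<open>h z = 0\<close> by auto
qed

lemma negative_if_decreasing_at_zeros:
  fixes h :: "real \<Rightarrow> real"
  assumes "s < t" and cont: "continuous_on {s..t} h" and "h s \<le> 0"
    and decr: "\<And>z. z \<in> {s..t} \<Longrightarrow> h z = 0 \<Longrightarrow> \<exists>d<0. (h has_real_derivative d) (at z within {s..t})"
  shows "h t < 0"
proof -
  obtain r where r: "s \<le> r" "r < t" "h r < 0"
  proof (cases "h s < 0")
    case True
    then show ?thesis using that \<open>s < t\<close> by blast
  next
    case False
    then have "h s = 0" using \<open>h s \<le> 0\<close> by simp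
    from decr[of s] this \<open>s < t\<close> obtain d
      where "d < 0" "(h has_real_derivative d) (at s within {s..t})" by auto
    then obtain e where e: "e > 0" "\<And>\<eta>. \<eta> > 0 \<Longrightarrow> s + \<eta> \<in> {s..t} \<Longrightarrow> \<eta> < e \<Longrightarrow> h (s + \<eta>) < h s"
      using has_real_derivative_neg_dec_right by blast
    obtain \<eta> where "0 < \<eta>" "\<eta> < e" "\<eta> < t - s"
      using field_lbound_gt_zero[of e "t - s"] e \<open>s < t\<close> by auto
    then show ?thesis using that[of "s + \<eta>"] e(2)[of \<eta>] \<open>h s = 0\<close> by auto
  qed
  show ?thesis
  proof (rule negative_persists_if_decreasing_at_zeros[where h = h and r = r and S = "{s..t}"])
    show "continuous_on {r..t} h" by (rule continuous_on_subset[OF cont]) (use r in auto)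
  qed (use decr r in auto)
qed

lemma periodic1_no_zero_if_decreasing_at_zeros:
  fixes h :: "real \<Rightarrow> real"
  assumes "periodic1 h" "continuous_on UNIV h"
    and decr: "\<And>z. h z = 0 \<Longrightarrow> \<exists>d<0. (h has_real_derivative d) (at z)"
  shows "h x \<noteq> 0"
proof
  assume "h x = 0"
  have "h (x + 1) < 0"
  proof (rule negative_if_decreasing_at_zeros[where h = h and s = x and t = "x + 1"])
    show "continuous_on {x..x + 1} h" using assms(2) by (rule continuous_on_subset) simp
    show "\<exists>d<0. (h has_real_derivative d) (at z within {x..x + 1})" if "h z = 0" for z
      using decr[OF that] has_field_derivative_at_within by blast
  qed (use \<open>h x = 0\<close> in auto)
  then show False using assms(1) \<open>h x = 0\<close> by (simp add: periodic1_def)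
qed

lemma mult_le_of_abs_le_linear:
  fixes u v K c :: real
  assumes "\<bar>v\<bar> \<le> K * \<bar>u\<bar> + c"
  shows "2 * u * v \<le> (2*K + 1) * u\<^sup>2 + c\<^sup>2"
proof -
  have "2 * u * v \<le> 2 * (\<bar>u\<bar> * \<bar>v\<bar>)"
    by (metis abs_ge_self abs_mult mult.assoc mult_left_mono zero_le_numeral)
  also have "\<dots> \<le> 2 * (\<bar>u\<bar> * (K * \<bar>u\<bar> + c))"
    using assms by (intro mult_left_mono) auto
  also have "\<dots> \<le> (2*K + 1) * u\<^sup>2 + c\<^sup>2"
    using sum_squares_bound[of "\<bar>u\<bar>" c] by (simp add: power2_eq_square algebra_simps)
  finally show ?thesis .
qed

lemma gronwall_square:
  fixes h h' :: "real \<Rightarrow> real"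
  assumes "s \<le> t" and cont: "continuous_on {s..t} h"
    and deriv: "\<And>x. x \<in> {s<..<t} \<Longrightarrow> (h has_real_derivative h' x) (at x)"
    and growth: "\<And>x. x \<in> {s<..<t} \<Longrightarrow> \<bar>h' x\<bar> \<le> K * \<bar>h x\<bar> + c"
    and "K \<ge> 0"
  shows "(h t)\<^sup>2 \<le> exp ((2*K + 1) * (t - s)) * ((h s)\<^sup>2 + c\<^sup>2 * (t - s))"
proof -
  define M where "M = 2*K + 1"
  define \<phi> where "\<phi> x = exp (- (M * (x - s))) * (h x)\<^sup>2 - c\<^sup>2 * (x - s)" for x
  have "\<phi> t \<le> \<phi> s"
  proof (rule DERIV_nonpos_imp_decreasing_open[OF \<open>s \<le> t\<close>])
    fix x assume x: "s < x" "x < t"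
    let ?d = "exp (- (M * (x - s))) * (2 * h x * h' x - M * (h x)\<^sup>2) - c\<^sup>2"
    have "(\<phi> has_real_derivative ?d) (at x)"
      unfolding \<phi>_def using deriv[of x] x
      by (auto intro!: derivative_eq_intros simp: algebra_simps power2_eq_square)
    moreover have "?d \<le> 0"
    proof -
      have "2 * h x * h' x - M * (h x)\<^sup>2 \<le> c\<^sup>2"
        using mult_le_of_abs_le_linear[OF growth[of x]] x by (simp add: M_def)
      moreover have "0 < exp (- (M * (x - s)))" "exp (- (M * (x - s))) \<le> 1"
        using x \<open>K \<ge> 0\<close> by (auto simp: M_def)
      ultimately have "exp (- (M * (x - s))) * (2 * h x * h' x - M * (h x)\<^sup>2) \<le> 1 * c\<^sup>2"
        by (intro order.trans[OF mult_left_mono mult_right_mono]) auto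
      then show ?thesis by simp
    qed
    ultimately show "\<exists>y. (\<phi> has_real_derivative y) (at x) \<and> y \<le> 0" by blast
  qed (unfold \<phi>_def, intro continuous_intros cont)
  then have weighted: "exp (- (M * (t - s))) * (h t)\<^sup>2 \<le> (h s)\<^sup>2 + c\<^sup>2 * (t - s)"
    by (simp add: \<phi>_def)
  have "(h t)\<^sup>2 = exp (M * (t - s)) * (exp (- (M * (t - s))) * (h t)\<^sup>2)"
    by (simp add: mult.assoc[symmetric] exp_add[symmetric])
  also have "\<dots> \<le> exp (M * (t - s)) * ((h s)\<^sup>2 + c\<^sup>2 * (t - s))"
    using weighted by (intro mult_left_mono) auto
  finally show ?thesis by (simp add: M_def)
qed

section \<open>Scalar ODEs on an interval\<close>

definition ode_solution_on :: "(real \<Rightarrow> real \<Rightarrow> real) \<Rightarrow> real \<Rightarrow> (real \<Rightarrow> real) \<Rightarrow> bool" where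
  "ode_solution_on F T y \<longleftrightarrow>
     (\<forall>x\<in>{0..T}. (y has_real_derivative F x (y x)) (at x within {0..T}))"

lemma ode_solution_onD:
  "ode_solution_on F T y \<Longrightarrow> x \<in> {0..T} \<Longrightarrow> (y has_real_derivative F x (y x)) (at x within {0..T})"
  unfolding ode_solution_on_def by blast

lemma ode_solution_on_continuous: "ode_solution_on F T y \<Longrightarrow> continuous_on {0..T} y"
  by (rule DERIV_continuous_on) (rule ode_solution_onD)

lemma ode_solution_on_at:
  assumes "ode_solution_on F T y" "x \<in> {0<..<T}"
  shows "(y has_real_derivative F x (y x)) (at x)"
proof -
  have "at x within {0..T} = at x" using assms(2) by (intro at_within_interior) simp
  then show ?thesis using ode_solution_onD[OF assms(1), of x] assms(2) by simp
qed

lemma ode_solution_on_mono: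
  assumes "ode_solution_on F T y" "T' \<le> T"
  shows "ode_solution_on F T' y"
  unfolding ode_solution_on_def
proof
  fix x assume "x \<in> {0..T'}"
  then show "(y has_real_derivative F x (y x)) (at x within {0..T'})"
    by (intro has_field_derivative_subset[OF ode_solution_onD[OF assms(1)]]) (use assms(2) in auto)
qed

lemma ode_solution_on_shift:
  assumes y: "ode_solution_on F T y" and "\<And>p. periodic1 (\<lambda>x. F x p)"
  shows "ode_solution_on F (T - 1) (\<lambda>x. y (x + 1))"
  unfolding ode_solution_on_def
proof
  fix x assume x: "x \<in> {0..T - 1}"
  have per: "F (u + 1) p = F u p" for u p using assms(2) by (simp add: periodic1_def)
  have "(y has_real_derivative F (x + 1) (y (x + 1))) (at (x + 1) within (\<lambda>u. u + 1) ` {0..T - 1})"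
    by (rule has_field_derivative_subset[OF ode_solution_onD[OF y]]) (use x in auto)
  moreover have "((\<lambda>u. u + 1) has_real_derivative 1) (at x within {0..T - 1})"
    by (auto intro!: derivative_eq_intros)
  ultimately show "((\<lambda>x. y (x + 1)) has_real_derivative F x (y (x + 1))) (at x within {0..T - 1})"
    using DERIV_image_chain by (fastforce simp: o_def per)
qed

lemma ode_solution_on_deviation:
  assumes y: "ode_solution_on F T y" and z: "ode_solution_on F' T z"
    and lip: "\<And>x. L-lipschitz_on UNIV (F x)" and close: "\<And>x p. \<bar>F x p - F' x p\<bar> \<le> \<delta>"
    and x: "x \<in> {0..T}"
  shows "(y x - z x)\<^sup>2 \<le> exp ((2*L + 1) * x) * ((y 0 - z 0)\<^sup>2 + \<delta>\<^sup>2 * x)"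
proof -
  have "((\<lambda>x. y x - z x) x)\<^sup>2 \<le> exp ((2*L + 1) * (x - 0)) * (((\<lambda>x. y x - z x) 0)\<^sup>2 + \<delta>\<^sup>2 * (x - 0))"
  proof (rule gronwall_square)
    show "continuous_on {0..x} (\<lambda>x. y x - z x)"
      using ode_solution_on_continuous[OF y] ode_solution_on_continuous[OF z] x
      by (intro continuous_intros) (auto elim: continuous_on_subset)
    fix u assume u: "u \<in> {0<..<x}"
    then have "u \<in> {0<..<T}" using x by auto
    then show "((\<lambda>x. y x - z x) has_real_derivative F u (y u) - F' u (z u)) (at u)"
      by (intro DERIV_diff ode_solution_on_at[OF y] ode_solution_on_at[OF z])
    have "\<bar>F u (y u) - F u (z u)\<bar> \<le> L * \<bar>y u - z u\<bar>"
      using lipschitz_onD[OF lip, of "y u" "z u"] by (simp add: dist_real_def)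
    then show "\<bar>F u (y u) - F' u (z u)\<bar> \<le> L * \<bar>y u - z u\<bar> + \<delta>"
      using close[of u "z u"] by linarith
  qed (use x lipschitz_on_nonneg[OF lip] in auto)
  then show ?thesis by simp
qed

lemma ode_solution_on_unique:
  assumes "ode_solution_on F T y" "ode_solution_on F T z" "\<And>x. L-lipschitz_on UNIV (F x)"
    and "y 0 = z 0" "x \<in> {0..T}"
  shows "y x = z x"
  using ode_solution_on_deviation[OF assms(1,2,3), of 0 x] assms(4,5) by simp

lemma ode_solution_on_strict_comparison:
  assumes y: "ode_solution_on F T y" and z: "ode_solution_on F' T z"
    and "y 0 = z 0" and below: "\<And>x p. F x p < F' x p" and "0 < x" "x \<le> T"
  shows "y x < z x"
proof -
  have "(\<lambda>u. y u - z u) x < 0"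
  proof (rule negative_if_decreasing_at_zeros[where h = "\<lambda>u. y u - z u" and s = 0 and t = x])
    show "continuous_on {0..x} (\<lambda>u. y u - z u)"
      using ode_solution_on_continuous[OF y] ode_solution_on_continuous[OF z] \<open>x \<le> T\<close>
      by (intro continuous_intros) (auto elim: continuous_on_subset)
    fix w assume w: "w \<in> {0..x}" "y w - z w = 0"
    have "((\<lambda>u. y u - z u) has_real_derivative F w (y w) - F' w (z w)) (at w within {0..T})"
      using w \<open>x \<le> T\<close> by (intro DERIV_diff ode_solution_onD[OF y] ode_solution_onD[OF z]) auto
    then have "((\<lambda>u. y u - z u) has_real_derivative F w (y w) - F' w (z w)) (at w within {0..x})"
      by (rule has_field_derivative_subset) (use \<open>x \<le> T\<close> in auto)
    moreover have "F w (y w) - F' w (z w) < 0" using below[of w "y w"] w(2) by simp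
    ultimately show "\<exists>d<0. ((\<lambda>u. y u - z u) has_real_derivative d) (at w within {0..x})" by blast
  qed (use \<open>0 < x\<close> \<open>y 0 = z 0\<close> in auto)
  then show ?thesis by simp
qed

context
  fixes F :: "real \<Rightarrow> real \<Rightarrow> real" and L a :: real
  assumes lipschitz: "\<And>x. L-lipschitz_on UNIV (F x)"
    and continuous: "continuous_on UNIV (\<lambda>(x, p). F x p)"
begin

text \<open>The Picard map for \<open>y' = F x y\<close>, \<open>y 0 = a\<close>, written for \<open>\<psi> x = exp (- 2 L x) * y x\<close>: in the
  sup norm of \<open>\<psi>\<close> it is a contraction with factor \<open>1/2\<close> on every interval \<open>[0, T]\<close>.\<close>

definition weighted_picard :: "(real \<Rightarrow>\<^sub>C real) \<Rightarrow> real \<Rightarrow> real" where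
  "weighted_picard \<psi> u =
     exp (- (2 * L * u)) * (a + integral {0..u} (\<lambda>s. F s (exp (2 * L * s) * apply_bcontfun \<psi> s)))"

lemma picard_integrand_continuous:
  fixes \<psi> :: "real \<Rightarrow>\<^sub>C real"
  shows "continuous_on S (\<lambda>s. F s (exp (2 * L * s) * \<psi> s))"
proof -
  have "continuous_on S (\<lambda>s. (s, exp (2 * L * s) * \<psi> s))"
    by (intro continuous_intros continuous_on_apply_bcontfun)
  from continuous_on_compose2[OF continuous this] show ?thesis by simp
qed

lemma weighted_picard_continuous: "continuous_on {0..T} (weighted_picard \<psi>)"
  unfolding weighted_picard_def
  by (intro continuous_intros indefinite_integral_continuous_1 integrable_continuous_real
      picard_integrand_continuous)

lemma picard_integrand_dist:
  fixes \<psi>1 \<psi>2 :: "real \<Rightarrow>\<^sub>C real"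
  shows "\<bar>F s (exp (2 * L * s) * \<psi>1 s) - F s (exp (2 * L * s) * \<psi>2 s)\<bar> \<le> L * dist \<psi>1 \<psi>2 * exp (2 * L * s)"
proof -
  have "\<bar>F s (exp (2 * L * s) * \<psi>1 s) - F s (exp (2 * L * s) * \<psi>2 s)\<bar>
      \<le> L * \<bar>exp (2 * L * s) * \<psi>1 s - exp (2 * L * s) * \<psi>2 s\<bar>"
    using lipschitz_onD[OF lipschitz, of "exp (2 * L * s) * \<psi>1 s" "exp (2 * L * s) * \<psi>2 s"]
    by (simp add: dist_real_def)
  also have "\<dots> = L * exp (2 * L * s) * \<bar>\<psi>1 s - \<psi>2 s\<bar>"
    by (simp add: abs_mult right_diff_distrib[symmetric])
  also have "\<dots> \<le> L * exp (2 * L * s) * dist \<psi>1 \<psi>2"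
    using dist_bounded[of \<psi>1 s \<psi>2] lipschitz_on_nonneg[OF lipschitz]
    by (intro mult_left_mono) (auto simp: dist_real_def)
  finally show ?thesis by (simp add: ac_simps)
qed

lemma weighted_picard_contraction:
  assumes u: "u \<in> {0..T}"
  shows "\<bar>weighted_picard \<psi>1 u - weighted_picard \<psi>2 u\<bar> \<le> dist \<psi>1 \<psi>2 / 2"
proof -
  define D where "D = dist \<psi>1 \<psi>2"
  let ?k = "\<lambda>\<psi> s. F s (exp (2 * L * s) * \<psi> s)"
  have gap: "\<bar>?k \<psi>1 s - ?k \<psi>2 s\<bar> \<le> L * D * exp (2 * L * s)" for s
    unfolding D_def by (rule picard_integrand_dist)
  have majorant: "((\<lambda>s. L * D * exp (2 * L * s)) has_integral (D/2 * exp (2 * L * u) - D/2 * exp (2 * L * 0))) {0..u}"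
  proof (rule fundamental_theorem_of_calculus)
    fix s assume "s \<in> {0..u}"
    show "((\<lambda>s. D/2 * exp (2 * L * s)) has_vector_derivative L * D * exp (2 * L * s)) (at s within {0..u})"
      unfolding has_real_derivative_iff_has_vector_derivative[symmetric]
      by (auto intro!: derivative_eq_intros)
  qed (use u in auto)
  have int: "?k \<psi> integrable_on {0..u}" for \<psi> :: "real \<Rightarrow>\<^sub>C real"
    by (intro integrable_continuous_real picard_integrand_continuous)
  have "\<bar>integral {0..u} (?k \<psi>1) - integral {0..u} (?k \<psi>2)\<bar> = \<bar>integral {0..u} (\<lambda>s. ?k \<psi>1 s - ?k \<psi>2 s)\<bar>"
    by (simp add: integral_diff int)
  also have "\<dots> \<le> integral {0..u} (\<lambda>s. L * D * exp (2 * L * s))"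
  proof -
    have "norm (integral {0..u} (\<lambda>s. ?k \<psi>1 s - ?k \<psi>2 s)) \<le> integral {0..u} (\<lambda>s. L * D * exp (2 * L * s))"
      by (rule integral_norm_bound_integral)
        (use gap int majorant in \<open>auto intro: integrable_diff has_integral_integrable\<close>)
    then show ?thesis by simp
  qed
  also have "\<dots> = D/2 * exp (2 * L * u) - D/2" using integral_unique[OF majorant] by simp
  finally have "\<bar>integral {0..u} (?k \<psi>1) - integral {0..u} (?k \<psi>2)\<bar> \<le> D/2 * exp (2 * L * u) - D/2" .
  then have "\<bar>weighted_picard \<psi>1 u - weighted_picard \<psi>2 u\<bar> \<le> exp (- (2 * L * u)) * (D/2 * exp (2 * L * u) - D/2)"
    unfolding weighted_picard_def
    by (simp add: abs_mult right_diff_distrib[symmetric] mult_left_mono)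
  also have "\<dots> = D/2 - D/2 * exp (- (2 * L * u))" by (simp add: algebra_simps exp_minus field_simps)
  also have "\<dots> \<le> D/2" by (simp add: D_def)
  finally show ?thesis by (simp add: D_def)
qed

lemma weighted_picard_clamp_bcontfun: "(\<lambda>x. weighted_picard \<psi> (clamp 0 T x)) \<in> bcontfun"
proof -
  obtain g :: "real \<Rightarrow>\<^sub>C real" where "\<And>x. g x = weighted_picard \<psi> (clamp 0 T x)"
    using continuous_on_cbox_bcontfunE[of 0 T "weighted_picard \<psi>"] weighted_picard_continuous by auto
  then have "(\<lambda>x. weighted_picard \<psi> (clamp 0 T x)) = apply_bcontfun g" by auto
  then show ?thesis using apply_bcontfun[of g] by simp
qed

lemma ode_solution_on_exists:
  assumes "0 \<le> T"
  shows "\<exists>y. y 0 = a \<and> ode_solution_on F T y"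
proof -
  have clamp: "clamp 0 T x \<in> {0..T}" for x :: real
    using clamp_in_interval[of 0 T x] assms by simp
  define \<Phi> where "\<Phi> \<psi> = Bcontfun (\<lambda>x. weighted_picard \<psi> (clamp 0 T x))" for \<psi>
  have \<Phi>: "\<Phi> \<psi> x = weighted_picard \<psi> (clamp 0 T x)" for \<psi> x
    using weighted_picard_clamp_bcontfun by (simp add: \<Phi>_def Bcontfun_inverse)
  have "dist (\<Phi> \<psi>1) (\<Phi> \<psi>2) \<le> 1/2 * dist \<psi>1 \<psi>2" for \<psi>1 \<psi>2
    using weighted_picard_contraction[OF clamp] by (intro dist_bound) (simp add: \<Phi> dist_real_def)
  then obtain \<psi> where fixed: "\<Phi> \<psi> = \<psi>" using banach_fix_type[of "1/2" \<Phi>] by auto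
  define y where "y x = a + integral {0..x} (\<lambda>s. F s (exp (2 * L * s) * \<psi> s))" for x
  have y: "exp (2 * L * x) * \<psi> x = y x" if "x \<in> {0..T}" for x
  proof -
    have "\<psi> x = weighted_picard \<psi> x"
      using \<Phi>[of \<psi> x] fixed clamp_cancel_cbox[of x 0 T] that by simp
    then show ?thesis by (simp add: weighted_picard_def y_def exp_minus field_simps)
  qed
  have "ode_solution_on F T y"
    unfolding ode_solution_on_def
  proof
    fix x assume x: "x \<in> {0..T}"
    have "((\<lambda>x. integral {0..x} (\<lambda>s. F s (exp (2 * L * s) * \<psi> s))) has_real_derivative
        F x (exp (2 * L * x) * \<psi> x)) (at x within {0..T})"
      by (rule integral_has_real_derivative[OF picard_integrand_continuous x])
    then show "(y has_real_derivative F x (y x)) (at x within {0..T})"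
      unfolding y_def using y[OF x] by (auto intro!: derivative_eq_intros simp: y_def)
  qed
  moreover have "y 0 = a" by (simp add: y_def)
  ultimately show ?thesis by blast
qed

end

lemma ode_solution_on_return_periodic:
  assumes y: "ode_solution_on F 2 y" and lip: "\<And>x. L-lipschitz_on UNIV (F x)"
    and per: "\<And>p. periodic1 (\<lambda>x. F x p)" and "y 1 = y 0" and x: "x \<in> {0..1}"
  shows "y (x + 1) = y x"
proof -
  have shifted: "ode_solution_on F (2 - 1) (\<lambda>x. y (x + 1))" by (rule ode_solution_on_shift[OF y per])
  have restricted: "ode_solution_on F (2 - 1) y" by (rule ode_solution_on_mono[OF y]) simp
  have "(\<lambda>x. y (x + 1)) x = y x"
    by (rule ode_solution_on_unique[OF shifted restricted lip]) (use \<open>y 1 = y 0\<close> x in auto)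
  then show ?thesis by simp
qed

lemma periodic_extension_near:
  assumes y_per: "\<And>x. x \<in> {0..1} \<Longrightarrow> y (x + 1) = y x"
    and t: "t \<in> {of_int n - 1<..<of_int n + 1}"
  shows "y (t - of_int \<lfloor>t\<rfloor> + 1) = y (t + (1 - of_int n))"
proof (cases "of_int n \<le> t")
  case True
  then have "\<lfloor>t\<rfloor> = n" using t by (intro floor_unique) auto
  then show ?thesis by (simp add: algebra_simps)
next
  case False
  then have fl: "\<lfloor>t\<rfloor> = n - 1" using t by (intro floor_unique) auto
  have "y (t - of_int \<lfloor>t\<rfloor> + 1) = y ((t + (1 - of_int n)) + 1)" unfolding fl by (simp add: algebra_simps)
  also have "\<dots> = y (t + (1 - of_int n))" using False t by (intro y_per) auto
  finally show ?thesis .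
qed

lemma ode_solution_periodic_extension:
  assumes y: "ode_solution_on F 2 y" and per: "\<And>p. periodic1 (\<lambda>x. F x p)"
    and y_per: "\<And>x. x \<in> {0..1} \<Longrightarrow> y (x + 1) = y x"
  obtains f where "\<And>x. (f has_real_derivative F x (f x)) (at x)" "periodic1 f"
    "\<And>x. x \<in> {0..1} \<Longrightarrow> f x = y x"
proof
  \<comment> \<open>Near \<open>x\<close>, \<open>f\<close> is the translate \<open>\<lambda>t. y (t + 1 - \<lfloor>x\<rfloor>)\<close>, evaluated inside the open interval \<open>(0, 2)\<close>.\<close>
  define f where "f x = y (x - of_int \<lfloor>x\<rfloor> + 1)" for x
  have near: "f t = y (t + (1 - of_int n))" if "t \<in> {of_int n - 1<..<of_int n + 1}" for t n
    unfolding f_def by (rule periodic_extension_near[where y = y, OF y_per that])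
  show "(f has_real_derivative F x (f x)) (at x)" for x
  proof -
    define n where "n = \<lfloor>x\<rfloor>"
    have x: "of_int n \<le> x" "x < of_int n + 1" unfolding n_def by linarith+
    then have "(y has_real_derivative F (x + (1 - of_int n)) (y (x + (1 - of_int n))))
        (at (x + (1 - of_int n)))"
      by (intro ode_solution_on_at[OF y]) auto
    then have "((\<lambda>t. y (t + (1 - of_int n))) has_real_derivative F (x + (1 - of_int n)) (f x)) (at x)"
      using near[of x n] x by (simp only: DERIV_shift) simp
    then have "(f has_real_derivative F (x + (1 - of_int n)) (f x)) (at x)"
      by (rule has_field_derivative_transform_within_open[where S = "{of_int n - 1<..<of_int n + 1}"])
        (use x near in auto)
    then show ?thesis using periodic1_add_of_int[OF per, of x "1 - n"] by simp
  qed
  show "periodic1 f" unfolding periodic1_def f_def by simp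
  show "f x = y x" if "x \<in> {0..1}" for x
  proof (cases "x = 1")
    case False
    then have "\<lfloor>x\<rfloor> = 0" using that by (intro floor_unique) auto
    then show ?thesis using y_per[OF that] by (simp add: f_def)
  qed (simp add: f_def)
qed

section \<open>The cell problem for a bounded Lipschitz nonlinearity\<close>

locale lipschitz_cell_problem =
  fixes g V :: "real \<Rightarrow> real" and L B :: real
  assumes g_lipschitz: "L-lipschitz_on UNIV g"
    and g_bounded: "\<And>p. \<bar>g p\<bar> \<le> B" and V_bounded: "\<And>x. \<bar>V x\<bar> \<le> B"
    and V_continuous: "continuous_on UNIV V" and V_periodic: "periodic1 V"
begin

definition cell_field :: "real \<Rightarrow> real \<Rightarrow> real \<Rightarrow> real" where
  "cell_field H x p = H - g p - V x"

lemma cell_field_lipschitz: "L-lipschitz_on UNIV (cell_field H x)"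
proof (rule lipschitz_onI)
  show "dist (cell_field H x p) (cell_field H x q) \<le> L * dist p q" for p q
    using lipschitz_onD[OF g_lipschitz, of p q] by (simp add: cell_field_def dist_real_def abs_minus_commute)
qed (rule lipschitz_on_nonneg[OF g_lipschitz])

lemma cell_field_continuous: "continuous_on UNIV (\<lambda>(x, p). cell_field H x p)"
proof -
  have "continuous_on UNIV (\<lambda>z :: real \<times> real. g (snd z))"
    by (rule continuous_on_compose2[OF lipschitz_on_continuous_on[OF g_lipschitz]]) (auto intro: continuous_intros)
  moreover have "continuous_on UNIV (\<lambda>z :: real \<times> real. V (fst z))"
    by (rule continuous_on_compose2[OF V_continuous]) (auto intro: continuous_intros)
  ultimately show ?thesis
    unfolding cell_field_def case_prod_beta by (intro continuous_intros)
qed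

lemma cell_field_periodic: "periodic1 (\<lambda>x. cell_field H x p)"
  using V_periodic by (simp add: periodic1_def cell_field_def)

text \<open>Solutions on \<open>[0, 2]\<close> suffice: one period to close up, and one more for the periodic extension.\<close>

definition cell_solution :: "real \<Rightarrow> real \<Rightarrow> real \<Rightarrow> real" where
  "cell_solution H a = (SOME y. y 0 = a \<and> ode_solution_on (cell_field H) 2 y)"

lemma cell_solution: "cell_solution H a 0 = a" "ode_solution_on (cell_field H) 2 (cell_solution H a)"
  using someI_ex[OF ode_solution_on_exists[OF cell_field_lipschitz cell_field_continuous, of 2 a]]
  unfolding cell_solution_def by auto

lemma cell_solution_dist_square:
  assumes x: "x \<in> {0..2}"
  shows "(cell_solution H a x - cell_solution H' a' x)\<^sup>2
    \<le> exp ((2*L + 1) * 2) * ((a - a')\<^sup>2 + \<bar>H - H'\<bar>\<^sup>2 * 2)"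
proof -
  have L: "0 \<le> L" by (rule lipschitz_on_nonneg[OF g_lipschitz])
  have "(cell_solution H a x - cell_solution H' a' x)\<^sup>2
      \<le> exp ((2*L + 1) * x) * ((cell_solution H a 0 - cell_solution H' a' 0)\<^sup>2 + \<bar>H - H'\<bar>\<^sup>2 * x)"
    by (rule ode_solution_on_deviation[OF cell_solution(2) cell_solution(2) cell_field_lipschitz _ x])
      (simp add: cell_field_def)
  also have "\<dots> \<le> exp ((2*L + 1) * 2) * ((a - a')\<^sup>2 + \<bar>H - H'\<bar>\<^sup>2 * 2)"
  proof (rule mult_mono)
    have "(2*L + 1) * x \<le> (2*L + 1) * 2" using x L by (intro mult_left_mono) auto
    then show "exp ((2*L + 1) * x) \<le> exp ((2*L + 1) * 2)" by simp
    show "(cell_solution H a 0 - cell_solution H' a' 0)\<^sup>2 + \<bar>H - H'\<bar>\<^sup>2 * x \<le> (a - a')\<^sup>2 + \<bar>H - H'\<bar>\<^sup>2 * 2"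
      using x by (simp add: cell_solution(1) mult_left_mono)
  qed (use x in auto)
  finally show ?thesis .
qed

lemma cell_solution_dist:
  assumes x: "x \<in> {0..2}"
  shows "\<bar>cell_solution H a x - cell_solution H' a' x\<bar> \<le> exp ((2*L + 1) * 2) * (\<bar>a - a'\<bar> + 2 * \<bar>H - H'\<bar>)"
proof -
  define E where "E = exp ((2*L + 1) * 2)"
  have E: "1 \<le> E" using lipschitz_on_nonneg[OF g_lipschitz] by (simp add: E_def)
  have sq: "d\<^sup>2 + e\<^sup>2 * 2 \<le> (d + 2 * e)\<^sup>2" if "0 \<le> d" "0 \<le> e" for d e :: real
    using mult_nonneg_nonneg[OF that] mult_nonneg_nonneg[OF that(2) that(2)]
    by (simp add: power2_eq_square algebra_simps)
  have "(cell_solution H a x - cell_solution H' a' x)\<^sup>2 \<le> E * ((a - a')\<^sup>2 + \<bar>H - H'\<bar>\<^sup>2 * 2)"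
    unfolding E_def by (rule cell_solution_dist_square[OF x])
  also have "\<dots> \<le> E * (1 * (\<bar>a - a'\<bar> + 2 * \<bar>H - H'\<bar>)\<^sup>2)"
    using sq[of "\<bar>a - a'\<bar>" "\<bar>H - H'\<bar>"] E by (intro mult_left_mono) auto
  also have "\<dots> \<le> E * (E * (\<bar>a - a'\<bar> + 2 * \<bar>H - H'\<bar>)\<^sup>2)"
    using E by (intro mult_left_mono mult_right_mono) auto
  also have "\<dots> = (E * (\<bar>a - a'\<bar> + 2 * \<bar>H - H'\<bar>))\<^sup>2" by (simp add: power2_eq_square)
  finally show ?thesis
    using E unfolding E_def[symmetric] by (simp add: abs_le_square_iff[symmetric])
qed

lemma cell_solution_lipschitz:
  assumes "x \<in> {0..2}"
  shows "(3 * exp ((2*L + 1) * 2))-lipschitz_on UNIV (\<lambda>(a, H). cell_solution H a x)"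
proof (rule lipschitz_onI)
  fix p q :: "real \<times> real"
  have "\<bar>fst p - fst q\<bar> + 2 * \<bar>snd p - snd q\<bar> \<le> 3 * dist p q"
    using dist_fst_le[of p q] dist_snd_le[of p q] by (simp add: dist_real_def)
  then show "dist ((\<lambda>(a, H). cell_solution H a x) p) ((\<lambda>(a, H). cell_solution H a x) q) \<le> 3 * exp ((2*L + 1) * 2) * dist p q"
    using cell_solution_dist[OF assms, of "snd p" "fst p" "snd q" "fst q"]
    by (auto simp: dist_real_def case_prod_beta intro: order.trans)
qed simp

lemma cell_solution_continuous:
  assumes "x \<in> {0..2}"
  shows "continuous_on UNIV (\<lambda>(a, H). cell_solution H a x)"
  by (rule lipschitz_on_continuous_on[OF cell_solution_lipschitz[OF assms]])

lemma cell_solution_continuous_level: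
  assumes "x \<in> {0..2}"
  shows "continuous_on S (\<lambda>H. cell_solution H a x)"
proof -
  have "continuous_on S (\<lambda>H. (a, H))" by (intro continuous_intros)
  from continuous_on_compose2[OF cell_solution_continuous[OF assms] this] show ?thesis by simp
qed

lemma cell_solution_continuous_start:
  assumes "x \<in> {0..2}"
  shows "continuous_on S (\<lambda>a. cell_solution H a x)"
proof -
  have "continuous_on S (\<lambda>a. (a, H))" by (intro continuous_intros)
  from continuous_on_compose2[OF cell_solution_continuous[OF assms] this] show ?thesis by simp
qed

lemma cell_solution_continuous_on_unit: "continuous_on {0..1} (cell_solution H a)"
  by (rule continuous_on_subset[OF ode_solution_on_continuous[OF cell_solution(2)]]) auto

lemma cell_solution_strict_mono:
  assumes "H < H'" "0 < x" "x \<le> 2"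
  shows "cell_solution H a x < cell_solution H' a x"
  by (rule ode_solution_on_strict_comparison[OF cell_solution(2) cell_solution(2)])
    (use assms in \<open>auto simp: cell_solution(1) cell_field_def\<close>)

lemma cell_solution_drift:
  assumes x: "x \<in> {0..2}"
  shows "\<bar>cell_solution H a x - a - H * x\<bar> \<le> 2 * B * x"
proof -
  let ?y = "cell_solution H a"
  have "norm ((?y x - H * x) - (?y 0 - H * 0)) \<le> 2 * B * norm (x - 0)"
  proof (rule field_differentiable_bound[OF convex_real_interval(5)])
    fix u :: real assume "u \<in> {0..2}"
    show "((\<lambda>u. ?y u - H * u) has_field_derivative - g (?y u) - V u) (at u within {0..2})"
      using ode_solution_onD[OF cell_solution(2) \<open>u \<in> {0..2}\<close>]
      by (auto intro!: derivative_eq_intros simp: cell_field_def)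
    show "norm (- g (?y u) - V u) \<le> 2 * B"
      using g_bounded[of "?y u"] V_bounded[of u] by simp
  qed (use x in auto)
  then show ?thesis using x by (simp add: cell_solution(1))
qed

definition return_level :: "real \<Rightarrow> real" where
  "return_level a = (SOME H. \<bar>H\<bar> \<le> 2 * B \<and> cell_solution H a 1 = a)"

lemma return_level: "cell_solution (return_level a) a 1 = a" "\<bar>return_level a\<bar> \<le> 2 * B"
proof -
  have "continuous_on {-2 * B..2 * B} (\<lambda>H. cell_solution H a 1)"
    by (rule cell_solution_continuous_level) simp
  moreover have "cell_solution (-2 * B) a 1 \<le> a" "a \<le> cell_solution (2 * B) a 1"
    using cell_solution_drift[of 1 "-2 * B" a] cell_solution_drift[of 1 "2 * B" a] by auto
  moreover have "0 \<le> B" using V_bounded[of 0] by linarith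
  ultimately have "\<exists>H\<ge>-2 * B. H \<le> 2 * B \<and> cell_solution H a 1 = a"
    by (intro IVT') auto
  then obtain H where "- 2 * B \<le> H" "H \<le> 2 * B" "cell_solution H a 1 = a" by blast
  then have "\<exists>H. \<bar>H\<bar> \<le> 2 * B \<and> cell_solution H a 1 = a" by (intro exI[of _ H]) auto
  from someI_ex[OF this] show "cell_solution (return_level a) a 1 = a" "\<bar>return_level a\<bar> \<le> 2 * B"
    unfolding return_level_def by auto
qed

lemma return_level_continuous: "continuous_on UNIV return_level"
proof (rule continuous_on_implicit_root)
  show "strict_mono (\<lambda>H. cell_solution H a 1 - a)" for a
    by (rule strict_monoI) (simp add: cell_solution_strict_mono)
  show "continuous_on UNIV (\<lambda>a. cell_solution H a 1 - a)" for H
    by (intro continuous_intros cell_solution_continuous_start) simp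
  show "cell_solution (return_level a) a 1 - a = 0" for a by (simp add: return_level(1))
qed

definition return_mean :: "real \<Rightarrow> real" where
  "return_mean a = integral {0..1} (cell_solution (return_level a) a)"

lemma return_mean_continuous: "continuous_on UNIV return_mean"
proof -
  define C where "C = 3 * exp ((2*L + 1) * 2)"
  note cont = cell_solution_continuous_on_unit
  have "C-lipschitz_on UNIV (\<lambda>(a, H). integral {0..1} (cell_solution H a))"
  proof (rule lipschitz_onI)
    fix p q :: "real \<times> real"
    have "norm (integral {0..1} (\<lambda>x. cell_solution (snd p) (fst p) x - cell_solution (snd q) (fst q) x))
        \<le> C * dist p q * (1 - 0)"
    proof (rule integral_bound)
      fix x :: real assume "x \<in> {0..1}"
      then show "norm (cell_solution (snd p) (fst p) x - cell_solution (snd q) (fst q) x) \<le> C * dist p q"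
        using lipschitz_onD[OF cell_solution_lipschitz, of x p q] by (auto simp: C_def dist_real_def case_prod_beta)
    qed (auto intro: continuous_intros cont)
    then show "dist ((\<lambda>(a, H). integral {0..1} (cell_solution H a)) p) ((\<lambda>(a, H). integral {0..1} (cell_solution H a)) q)
        \<le> C * dist p q"
      by (simp add: dist_real_def case_prod_beta integral_diff integrable_continuous_real cont)
  qed (simp add: C_def)
  from lipschitz_on_continuous_on[OF this]
  have "continuous_on UNIV (\<lambda>(a, H). integral {0..1} (cell_solution H a))" .
  moreover have "continuous_on UNIV (\<lambda>a. (a, return_level a))"
    by (intro continuous_intros return_level_continuous)
  ultimately show ?thesis
    using continuous_on_compose2 by (fastforce simp: return_mean_def)
qed

lemma return_mean_near: "\<bar>return_mean a - a\<bar> \<le> 4 * B"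
proof -
  let ?y = "cell_solution (return_level a) a"
  have "norm (integral {0..1} (\<lambda>x. ?y x - a)) \<le> 4 * B * (1 - 0)"
  proof (rule integral_bound)
    show "continuous_on {0..1} (\<lambda>x. ?y x - a)"
      by (intro continuous_intros cell_solution_continuous_on_unit)
    fix x :: real assume x: "x \<in> {0..1}"
    have "\<bar>?y x - a\<bar> \<le> \<bar>return_level a\<bar> * x + 2 * B * x"
      using cell_solution_drift[of x "return_level a" a] x
        abs_triangle_ineq[of "?y x - a - return_level a * x" "return_level a * x"]
      by (simp add: abs_mult)
    also have "\<dots> \<le> 2 * B * 1 + 2 * B * 1"
      using return_level(2)[of a] x V_bounded[of 0] by (intro add_mono mult_mono) auto
    finally show "norm (?y x - a) \<le> 4 * B" by simp
  qed simp
  moreover have "?y integrable_on {0..1}"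
    by (intro integrable_continuous_real cell_solution_continuous_on_unit)
  then have "integral {0..1} (\<lambda>x. ?y x - a) = integral {0..1} ?y - integral {0..1} (\<lambda>_::real. a)"
    by (intro integral_diff) auto
  ultimately show ?thesis by (simp add: return_mean_def)
qed

lemma return_mean_surj: "\<exists>a. return_mean a = \<theta>"
proof -
  have "\<exists>a\<ge>\<theta> - 4 * B. a \<le> \<theta> + 4 * B \<and> return_mean a = \<theta>"
    using return_mean_near[of "\<theta> - 4 * B"] return_mean_near[of "\<theta> + 4 * B"] V_bounded[of 0]
    by (intro IVT' continuous_on_subset[OF return_mean_continuous]) auto
  then show ?thesis by blast
qed

theorem periodic_cell_solution_exists:
  "\<exists>f H. (\<forall>x. (f has_real_derivative H - g (f x) - V x) (at x)) \<and> periodic1 f \<and> integral {0..1} f = \<theta>"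
proof -
  obtain a where a: "return_mean a = \<theta>" using return_mean_surj by blast
  let ?H = "return_level a"
  let ?y = "cell_solution ?H a"
  have "?y (x + 1) = ?y x" if "x \<in> {0..1}" for x
    by (rule ode_solution_on_return_periodic[OF cell_solution(2) cell_field_lipschitz cell_field_periodic])
      (use that in \<open>simp_all add: return_level(1) cell_solution(1)\<close>)
  then obtain f where f: "\<And>x. (f has_real_derivative cell_field ?H x (f x)) (at x)" "periodic1 f"
    "\<And>x. x \<in> {0..1} \<Longrightarrow> f x = ?y x"
    using ode_solution_periodic_extension[OF cell_solution(2) cell_field_periodic] by blast
  have "integral {0..1} f = \<theta>"
    using a unfolding return_mean_def by (auto intro: integral_cong f(3))
  with f show ?thesis unfolding cell_field_def by blast
qed

end

section \<open>Correctors\<close>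

lemma C1_differentiable_on_UNIV_real_derivative:
  fixes G :: "real \<Rightarrow> real"
  assumes "G C1_differentiable_on UNIV"
  obtains D where "\<And>x. (G has_real_derivative D x) (at x)" "continuous_on UNIV D"
  using assms unfolding C1_differentiable_on_def has_real_derivative_iff_has_vector_derivative by blast

lemma C1_differentiable_on_UNIV_continuous:
  fixes G :: "real \<Rightarrow> real"
  assumes "G C1_differentiable_on UNIV"
  shows "continuous_on UNIV G"
  by (rule C1_differentiable_on_UNIV_real_derivative[OF assms])
    (auto intro: has_real_derivative_imp_continuous_on)

lemma C1_lipschitz_on_interval:
  fixes G :: "real \<Rightarrow> real"
  assumes "G C1_differentiable_on UNIV"
  obtains K where "K-lipschitz_on {a..b} G"
proof -
  obtain D where D: "\<And>x. (G has_real_derivative D x) (at x)" "continuous_on UNIV D"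
    using C1_differentiable_on_UNIV_real_derivative[OF assms] by blast
  have "bounded (D ` {a..b})"
    by (intro compact_imp_bounded compact_continuous_image continuous_on_subset[OF D(2)]) auto
  then obtain K where K: "0 < K" "\<forall>d\<in>D ` {a..b}. norm d \<le> K"
    unfolding bounded_pos by blast
  have "norm (G x - G y) \<le> K * norm (x - y)" if "x \<in> {a..b}" "y \<in> {a..b}" for x y
  proof (rule field_differentiable_bound[OF convex_real_interval(5) _ _ that])
    show "(G has_field_derivative D z) (at z within {a..b})" for z
      using D(1) by (rule has_field_derivative_at_within)
    show "norm (D z) \<le> K" if "z \<in> {a..b}" for z
      using K(2) that by blast
  qed
  then have "K-lipschitz_on {a..b} G"
    using K(1) by (intro lipschitz_onI) (auto simp: dist_real_def)
  then show ?thesis by (rule that)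
qed

lemma lipschitz_on_compose_clip:
  fixes G :: "real \<Rightarrow> real"
  assumes "K-lipschitz_on {a..b} G" "a \<le> b"
  shows "K-lipschitz_on UNIV (\<lambda>p. G (max a (min b p)))"
proof -
  have "1-lipschitz_on UNIV (\<lambda>p. max a (min b p))"
    by (rule lipschitz_onI) (auto simp: dist_real_def max_def min_def)
  moreover have "(\<lambda>p. max a (min b p)) ` UNIV \<subseteq> {a..b}" using assms(2) by auto
  then have "K-lipschitz_on ((\<lambda>p. max a (min b p)) ` UNIV) G"
    by (rule lipschitz_on_subset[OF assms(1)])
  ultimately show ?thesis using lipschitz_on_compose2[of 1 UNIV "\<lambda>p. max a (min b p)" K G] by simp
qed

lemma coercive_large_outside:
  assumes "coercive G"
  obtains R where "r \<le> R" "\<And>p. R \<le> \<bar>p\<bar> \<Longrightarrow> c < G p"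
proof -
  obtain R1 where R1: "\<And>p. R1 \<le> p \<Longrightarrow> c < G p"
    using assms unfolding coercive_def filterlim_at_top_dense eventually_at_top_linorder by blast
  obtain R2 where R2: "\<And>p. p \<le> R2 \<Longrightarrow> c < G p"
    using assms unfolding coercive_def filterlim_at_top_dense eventually_at_bot_linorder by blast
  have "c < G p" if "max r (max R1 (- R2)) \<le> \<bar>p\<bar>" for p
  proof (cases "0 \<le> p")
    case True
    then show ?thesis using that by (intro R1) simp
  next
    case False
    then show ?thesis using that by (intro R2) simp
  qed
  then show ?thesis by (rule that[of "max r (max R1 (- R2))", OF max.cobounded1])
qed

lemma periodic_solution_field_nonneg_somewhere:
  fixes f :: "real \<Rightarrow> real" and F :: "real \<Rightarrow> real \<Rightarrow> real"
  assumes deriv: "\<And>x. (f has_real_derivative F x (f x)) (at x)" and "periodic1 f"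
  obtains x where "0 \<le> F x (f x0)"
proof (rule ccontr)
  assume "\<not> thesis"
  with that have neg: "F x (f x0) < 0" for x by (meson not_le)
  have "(\<lambda>t. f t - f x0) x0 \<noteq> 0"
  proof (rule periodic1_no_zero_if_decreasing_at_zeros[where h = "\<lambda>t. f t - f x0" and x = x0])
    show "periodic1 (\<lambda>t. f t - f x0)" using \<open>periodic1 f\<close> by (simp add: periodic1_def)
    show "continuous_on UNIV (\<lambda>t. f t - f x0)"
      using deriv by (intro continuous_intros has_real_derivative_imp_continuous_on) blast
    fix z assume "f z - f x0 = 0"
    have "((\<lambda>t. f t - f x0) has_real_derivative F z (f z) - 0) (at z)"
      by (rule DERIV_diff[OF deriv DERIV_const])
    then have "((\<lambda>t. f t - f x0) has_real_derivative F z (f x0)) (at z)"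
      using \<open>f z - f x0 = 0\<close> by simp
    then show "\<exists>d<0. ((\<lambda>t. f t - f x0) has_real_derivative d) (at z)" using neg by blast
  qed
  then show False by simp
qed

lemma periodic_solution_field_nonpos_somewhere:
  fixes f :: "real \<Rightarrow> real" and F :: "real \<Rightarrow> real \<Rightarrow> real"
  assumes deriv: "\<And>x. (f has_real_derivative F x (f x)) (at x)" and "periodic1 f"
  obtains x where "F x (f x0) \<le> 0"
proof -
  have "((\<lambda>x. - f x) has_real_derivative (\<lambda>x p. - F x (- p)) x (- f x)) (at x)" for x
    using DERIV_minus[OF deriv[of x]] by simp
  moreover have "periodic1 (\<lambda>x. - f x)" using \<open>periodic1 f\<close> by (simp add: periodic1_def)
  ultimately obtain x where "0 \<le> (\<lambda>x p. - F x (- p)) x (- f x0)"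
    by (rule periodic_solution_field_nonneg_somewhere[where f = "\<lambda>x. - f x"])
  then show ?thesis using that by simp
qed

lemma periodic_cell_solution_level_bound:
  fixes f g V :: "real \<Rightarrow> real"
  assumes "\<And>x. (f has_real_derivative H - g (f x) - V x) (at x)" "periodic1 f"
    and "\<And>x. \<bar>V x\<bar> \<le> v"
  shows "\<bar>g (f x0) - H\<bar> \<le> v"
proof -
  obtain x1 where "0 \<le> H - g (f x0) - V x1"
    using periodic_solution_field_nonneg_somewhere[where F = "\<lambda>x p. H - g p - V x"] assms(1,2) by blast
  moreover obtain x2 where "H - g (f x0) - V x2 \<le> 0"
    using periodic_solution_field_nonpos_somewhere[where F = "\<lambda>x p. H - g p - V x"] assms(1,2) by blast
  ultimately show ?thesis using assms(3)[of x1] assms(3)[of x2] by linarith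
qed

lemma periodic_solutions_same_level:
  fixes f1 f2 G V :: "real \<Rightarrow> real"
  assumes "\<And>x. (f1 has_real_derivative H1 - G (f1 x) - V x) (at x)" "periodic1 f1"
    and "\<And>x. (f2 has_real_derivative H2 - G (f2 x) - V x) (at x)" "periodic1 f2"
    and "f1 z = f2 z"
  shows "H1 = H2"
proof -
  have apart: "f x \<noteq> f' x"
    if deriv: "\<And>x. (f has_real_derivative H - G (f x) - V x) (at x)" "periodic1 f"
      and deriv': "\<And>x. (f' has_real_derivative H' - G (f' x) - V x) (at x)" "periodic1 f'"
      and "H < H'"
    for f f' H H' x
  proof -
    have "(\<lambda>t. f t - f' t) x \<noteq> 0"
    proof (rule periodic1_no_zero_if_decreasing_at_zeros[where h = "\<lambda>t. f t - f' t"])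
      show "periodic1 (\<lambda>t. f t - f' t)" using that(2,4) by (simp add: periodic1_def)
      show "continuous_on UNIV (\<lambda>t. f t - f' t)"
        using deriv(1) deriv'(1)
        by (intro continuous_intros has_real_derivative_imp_continuous_on) blast+
      fix w assume "f w - f' w = 0"
      moreover have "((\<lambda>t. f t - f' t) has_real_derivative (H - G (f w) - V w) - (H' - G (f' w) - V w)) (at w)"
        by (rule DERIV_diff[OF deriv(1) deriv'(1)])
      ultimately have "((\<lambda>t. f t - f' t) has_real_derivative H - H') (at w)" by simp
      then show "\<exists>d<0. ((\<lambda>t. f t - f' t) has_real_derivative d) (at w)"
        using \<open>H < H'\<close> by (intro exI[of _ "H - H'"]) simp
    qed
    then show ?thesis by simp
  qed
  show ?thesis
    using apart[OF assms(1-4), of z] apart[OF assms(3,4,1,2), of z] assms(5) by (cases H1 H2 rule: linorder_cases) auto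
qed

lemma periodic_solutions_unique:
  fixes f1 f2 G V :: "real \<Rightarrow> real"
  assumes G: "G C1_differentiable_on UNIV"
    and d1: "\<And>x. (f1 has_real_derivative H - G (f1 x) - V x) (at x)" and p1: "periodic1 f1"
    and d2: "\<And>x. (f2 has_real_derivative H - G (f2 x) - V x) (at x)" and p2: "periodic1 f2"
    and "f1 z = f2 z"
  shows "f1 = f2"
proof -
  have c1: "continuous_on UNIV f1" by (rule has_real_derivative_imp_continuous_on) (rule d1)
  have c2: "continuous_on UNIV f2" by (rule has_real_derivative_imp_continuous_on) (rule d2)
  obtain M1 where M1: "\<And>x. \<bar>f1 x\<bar> \<le> M1" using continuous_periodic1_bounded[OF c1 p1] by blast
  obtain M2 where M2: "\<And>x. \<bar>f2 x\<bar> \<le> M2" using continuous_periodic1_bounded[OF c2 p2] by blast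
  define M where "M = max M1 M2"
  have range: "f1 x \<in> {-M..M}" "f2 x \<in> {-M..M}" for x
    using M1[of x] M2[of x] by (auto simp: M_def abs_le_iff)
  obtain K where K: "K-lipschitz_on {-M..M} G" using C1_lipschitz_on_interval[OF G] by blast
  have "(f1 t - f2 t)\<^sup>2 \<le> exp ((2*K + 1) * (t - z)) * ((f1 z - f2 z)\<^sup>2 + 0\<^sup>2 * (t - z))"
    if "t \<in> {z..z+1}" for t
  proof (rule gronwall_square[where h = "\<lambda>t. f1 t - f2 t"])
    show "continuous_on {z..t} (\<lambda>t. f1 t - f2 t)"
      using c1 c2 by (intro continuous_intros) (auto elim: continuous_on_subset)
    fix x
    show "((\<lambda>t. f1 t - f2 t) has_real_derivative G (f2 x) - G (f1 x)) (at x)"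
      using DERIV_diff[OF d1 d2, of x] by simp
    show "\<bar>G (f2 x) - G (f1 x)\<bar> \<le> K * \<bar>f1 x - f2 x\<bar> + 0"
      using lipschitz_onD[OF K range(2,1), of x] by (simp add: dist_real_def abs_minus_commute)
  qed (use that lipschitz_on_nonneg[OF K] in auto)
  then have "f1 t = f2 t" if "t \<in> {z..z+1}" for t
    using that \<open>f1 z = f2 z\<close> by simp
  then show ?thesis by (rule periodic1_eqI[OF p1 p2])
qed

lemma corrector_derivative:
  assumes "corrector G V \<theta> f H"
  shows "(f has_real_derivative H - G (f x) - V x) (at x)"
proof -
  obtain D where D: "\<And>x. (f has_real_derivative D x) (at x)"
    using assms unfolding corrector_def C1_differentiable_on_def
      has_real_derivative_iff_has_vector_derivative by blast
  have "D x = H - G (f x) - V x"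
    using DERIV_imp_deriv[OF D] assms unfolding corrector_def by (auto simp: algebra_simps)
  then show ?thesis using D[of x] by simp
qed

lemma corrector_continuous: "corrector G V \<theta> f H \<Longrightarrow> continuous_on UNIV f"
  by (rule has_real_derivative_imp_continuous_on) (rule corrector_derivative)

lemma corrector_periodic: "corrector G V \<theta> f H \<Longrightarrow> periodic1 f"
  unfolding corrector_def by blast

lemma corrector_integral: "corrector G V \<theta> f H \<Longrightarrow> integral {0..1} f = \<theta>"
  unfolding corrector_def by blast

lemma correctorI:
  assumes "continuous_on UNIV G" "continuous_on UNIV V"
    and deriv: "\<And>x. (f has_real_derivative H - G (f x) - V x) (at x)"
    and "periodic1 f" "integral {0..1} f = \<theta>"
  shows "corrector G V \<theta> f H"
  unfolding corrector_def
proof (intro conjI allI)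
  have "continuous_on UNIV f" by (rule has_real_derivative_imp_continuous_on) (rule deriv)
  then have "continuous_on UNIV (\<lambda>x. H - G (f x) - V x)"
    by (intro continuous_intros continuous_on_compose2[OF assms(1)] assms(2)) auto
  then show "f C1_differentiable_on UNIV"
    unfolding C1_differentiable_on_def has_real_derivative_iff_has_vector_derivative[symmetric]
    using deriv by (intro exI[of _ "\<lambda>x. H - G (f x) - V x"]) blast
  show "deriv f x + G (f x) + V x = H" for x by (simp add: DERIV_imp_deriv[OF deriv])
qed (use assms in auto)

lemma correctors_eq_if_touch:
  assumes G: "G C1_differentiable_on UNIV"
    and c1: "corrector G V \<theta>1 f1 H1" and c2: "corrector G V \<theta>2 f2 H2" and "f1 z = f2 z"
  shows "f1 = f2"
proof -
  note d1 = corrector_derivative[OF c1] and d2 = corrector_derivative[OF c2]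
  have "H1 = H2"
    by (rule periodic_solutions_same_level[OF d1 corrector_periodic[OF c1] d2 corrector_periodic[OF c2] \<open>f1 z = f2 z\<close>])
  with d2 have d2': "(f2 has_real_derivative H1 - G (f2 x) - V x) (at x)" for x by simp
  show ?thesis
    by (rule periodic_solutions_unique[OF G d1 corrector_periodic[OF c1] d2' corrector_periodic[OF c2] \<open>f1 z = f2 z\<close>])
qed

lemma correctors_touch:
  assumes c1: "corrector G V \<theta>1 f1 H1" and c2: "corrector G V \<theta>2 f2 H2"
  shows "\<exists>z\<in>{0..1}. f2 z - f1 z = \<theta>2 - \<theta>1"
proof -
  have int: "f integrable_on {0..1}" if "continuous_on UNIV f" for f :: "real \<Rightarrow> real"
    using that by (intro integrable_continuous_real) (auto elim: continuous_on_subset)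
  have "integral {0..1} (\<lambda>x. f2 x - f1 x) = \<theta>2 - \<theta>1"
    using corrector_integral[OF c1] corrector_integral[OF c2]
    by (simp add: integral_diff int corrector_continuous[OF c1] corrector_continuous[OF c2])
  moreover have "continuous_on {0..1} (\<lambda>x. f2 x - f1 x)"
    using corrector_continuous[OF c1] corrector_continuous[OF c2]
    by (intro continuous_intros) (auto elim: continuous_on_subset)
  ultimately show ?thesis using integral_value_attained by metis
qed

lemma lipschitz_cell_problem_clip:
  assumes G: "G C1_differentiable_on UNIV" and "0 \<le> R"
    and V: "continuous_on UNIV V" "periodic1 V" "\<And>x. \<bar>V x\<bar> \<le> v"
  obtains K B where "lipschitz_cell_problem (\<lambda>p. G (max (-R) (min R p))) V K B"
proof -
  obtain K where K: "K-lipschitz_on {-R..R} G" using C1_lipschitz_on_interval[OF G] by blast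
  have "bounded (G ` {-R..R})"
    by (intro compact_imp_bounded compact_continuous_image
        continuous_on_subset[OF C1_differentiable_on_UNIV_continuous[OF G]]) auto
  then obtain b where b: "\<forall>q\<in>G ` {-R..R}. norm q \<le> b" unfolding bounded_iff by blast
  have "\<bar>G (max (-R) (min R p))\<bar> \<le> max b v" for p
    using b \<open>0 \<le> R\<close> by (auto intro: le_max_iff_disj[THEN iffD2])
  moreover have "\<bar>V x\<bar> \<le> max b v" for x using V(3)[of x] by simp
  moreover have "K-lipschitz_on UNIV (\<lambda>p. G (max (-R) (min R p)))"
    using lipschitz_on_compose_clip[OF K] \<open>0 \<le> R\<close> by simp
  ultimately have "lipschitz_cell_problem (\<lambda>p. G (max (-R) (min R p))) V K (max b v)"
    using V by unfold_locales auto
  then show ?thesis by (rule that)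
qed

lemma periodic_clipped_solution_bounded:
  assumes deriv: "\<And>x. (f has_real_derivative H - G (max (-R) (min R (f x))) - V x) (at x)"
    and "periodic1 f" "\<And>x. \<bar>V x\<bar> \<le> v" and "f y = \<theta>" "\<bar>\<theta>\<bar> \<le> R"
    and large: "\<And>p. R \<le> \<bar>p\<bar> \<Longrightarrow> G \<theta> + 2 * v < G p"
  shows "\<bar>f x\<bar> \<le> R"
proof (rule ccontr)
  assume outside: "\<not> \<bar>f x\<bar> \<le> R"
  have "\<bar>G (max (-R) (min R (f x))) - H\<bar> \<le> v" "\<bar>G (max (-R) (min R (f y))) - H\<bar> \<le> v"
    by (rule periodic_cell_solution_level_bound[OF deriv \<open>periodic1 f\<close> \<open>\<And>x. \<bar>V x\<bar> \<le> v\<close>])+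
  moreover have "G (max (-R) (min R (f y))) = G \<theta>" using \<open>f y = \<theta>\<close> \<open>\<bar>\<theta>\<bar> \<le> R\<close> by auto
  moreover have "R \<le> \<bar>max (-R) (min R (f x))\<bar>" using outside by auto
  ultimately show False using large[of "max (-R) (min R (f x))"] by linarith
qed

lemma corrector_exists:
  fixes G V :: "real \<Rightarrow> real"
  assumes G: "G C1_differentiable_on UNIV" and "coercive G"
    and "\<exists>L. lipschitz_on L UNIV V" and "periodic1 V"
  shows "\<exists>f H. corrector G V \<theta> f H"
proof -
  have V: "continuous_on UNIV V" using assms(3) lipschitz_on_continuous_on by blast
  obtain v where v: "\<And>x. \<bar>V x\<bar> \<le> v" using continuous_periodic1_bounded[OF V \<open>periodic1 V\<close>] by blast
  obtain R where R: "\<bar>\<theta>\<bar> \<le> R" "\<And>p. R \<le> \<bar>p\<bar> \<Longrightarrow> G \<theta> + 2 * v < G p"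
    using coercive_large_outside[OF \<open>coercive G\<close>] by blast
  then have "0 \<le> R" by linarith
  then obtain K B where "lipschitz_cell_problem (\<lambda>p. G (max (-R) (min R p))) V K B"
    using lipschitz_cell_problem_clip[OF G _ V \<open>periodic1 V\<close> v] by blast
  then obtain f H where deriv: "\<And>x. (f has_real_derivative H - G (max (-R) (min R (f x))) - V x) (at x)"
    and "periodic1 f" and "integral {0..1} f = \<theta>"
    using lipschitz_cell_problem.periodic_cell_solution_exists by blast
  have "continuous_on {0..1} f"
    by (rule continuous_on_subset[OF has_real_derivative_imp_continuous_on[OF deriv]]) auto
  from integral_value_attained[OF this] obtain y where "f y = \<theta>"
    using \<open>integral {0..1} f = \<theta>\<close> by auto
  have "max (-R) (min R (f x)) = f x" for x
    using periodic_clipped_solution_bounded[OF deriv \<open>periodic1 f\<close> v \<open>f y = \<theta>\<close> R, of x]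
    by (simp add: abs_le_iff)
  then have "(f has_real_derivative H - G (f x) - V x) (at x)" for x using deriv[of x] by simp
  then have "corrector G V \<theta> f H"
    by (rule correctorI[OF C1_differentiable_on_UNIV_continuous[OF G] V _ \<open>periodic1 f\<close>
          \<open>integral {0..1} f = \<theta>\<close>])
  then show ?thesis by blast
qed

lemma f_theta_corrector:
  fixes G V :: "real \<Rightarrow> real"
  assumes "G C1_differentiable_on UNIV" "coercive G" "\<exists>L. lipschitz_on L UNIV V" "periodic1 V"
  shows "\<exists>H. corrector G V \<theta> (f_theta G V \<theta>) H"
proof -
  have uniq: "f = f'" if ex: "\<exists>H. corrector G V \<theta> f H" "\<exists>H. corrector G V \<theta> f' H" for f f'
  proof -
    obtain H H' where c: "corrector G V \<theta> f H" and c': "corrector G V \<theta> f' H'" using ex by blast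
    obtain z where "f' z - f z = \<theta> - \<theta>" using correctors_touch[OF c c'] by blast
    then have "f z = f' z" by simp
    then show "f = f'" by (rule correctors_eq_if_touch[OF assms(1) c c'])
  qed
  have "\<exists>!f. \<exists>H. corrector G V \<theta> f H" by (rule ex_ex1I[OF corrector_exists[OF assms] uniq])
  then show ?thesis unfolding f_theta_def by (rule theI')
qed

theorem lemma4p3:
  fixes G V :: "real \<Rightarrow> real" and \<theta>1 \<theta>2 :: real
  assumes "G C1_differentiable_on UNIV"
    and "coercive G"
    and "\<exists>L. lipschitz_on L UNIV V"
    and "periodic1 V"
    and "\<theta>1 < \<theta>2"
  shows "\<forall>x. f_theta G V \<theta>1 x < f_theta G V \<theta>2 x"
proof
  fix x
  define f1 f2 where "f1 = f_theta G V \<theta>1" and "f2 = f_theta G V \<theta>2"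
  obtain H1 H2 where c1: "corrector G V \<theta>1 f1 H1" and c2: "corrector G V \<theta>2 f2 H2"
    using f_theta_corrector[OF assms(1-4)] unfolding f1_def f2_def by blast
  have apart: "f2 t - f1 t \<noteq> 0" for t
  proof
    assume "f2 t - f1 t = 0"
    then have "f1 t = f2 t" by simp
    then have "f1 = f2" by (rule correctors_eq_if_touch[OF assms(1) c1 c2])
    then show False using corrector_integral[OF c1] corrector_integral[OF c2] \<open>\<theta>1 < \<theta>2\<close> by simp
  qed
  obtain z where "f2 z - f1 z = \<theta>2 - \<theta>1" using correctors_touch[OF c1 c2] by blast
  with \<open>\<theta>1 < \<theta>2\<close> have "0 < f2 z - f1 z" by simp
  moreover have "continuous_on UNIV (\<lambda>t. f2 t - f1 t)"
    by (intro continuous_intros corrector_continuous[OF c1] corrector_continuous[OF c2])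
  ultimately have "0 < (\<lambda>t. f2 t - f1 t) x"
    using continuous_nonvanishing_pos[where h = "\<lambda>t. f2 t - f1 t" and z = z] apart by blast
  then show "f_theta G V \<theta>1 x < f_theta G V \<theta>2 x" by (simp add: f1_def f2_def)
qed

end
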